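(* For a matroid $M$ of rank $r$ on $E=\{0,\dots,n\}$, \[ \int_{X_E} c(\mathcal Q_M) = \begin{cases}1 & \text{if $M$ is a loop, or $M=U_{1,E}$},\\ 0&\text{otherwise,}\end{cases}\qquad \int_{X_E} c(\mathcal S_M^{\vee}) = \begin{cases}1 & \text{if $M$ is a coloop, or $M=U_{n,E}$},\\ 0&\text{otherwise.}\end{cases} \]
   Context: $X_E$ is the $n$-dimensional permutohedral variety with $T=(\mathbb C^* )^E$-fixed points $p_\sigma$ indexed by permutations $\sigma$ of $E$, and $K_T^0(X_E)$ embeds into $\prod_\sigma\mathbb Z[T_0^{\pm1},\dots,T_n^{\pm1}]$ via restriction. $B_\sigma(M)$ is the lexicographically first basis of $M$ for the order $\sigma(0)\prec\cdots\prec\sigma(n)$; $[\mathcal S_M],[\mathcal Q_M]\in K_T^0(X_E)$ are the classes restricting at $p_\sigma$ to $\sum_{i\in B_\sigma(M)}T_i^{-1}$ and $\sum_{i\notin B_\sigma(M)}T_i^{-1}$; $c(\cdot)$ is the total non-equivariant Chern class, $\vee$ the dual. A loop (resp. coloop) as a matroid means a matroid of rank $0$ (resp. $1$) on a one-element ground set; $U_{r,E}$ is the uniform matroid of rank $r$ on $E$. *)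

theory Defs
  imports Complex_Main "HOL-Combinatorics.Permutations" "HOL-Library.List_Lexorder"
begin

definition matroid_bases :: "nat \<Rightarrow> nat set set \<Rightarrow> bool" where
  "matroid_bases n Bs \<longleftrightarrow> Bs \<noteq> {} \<and> (\<forall>B\<in>Bs. B \<subseteq> {..n}) \<and>
     (\<forall>B1\<in>Bs. \<forall>B2\<in>Bs. \<forall>x\<in>B1 - B2. \<exists>y\<in>B2 - B1. insert y (B1 - {x}) \<in> Bs)"

definition uniform_bases :: "nat \<Rightarrow> nat \<Rightarrow> nat set set" where
  "uniform_bases n k = {B. B \<subseteq> {..n} \<and> card B = k}"

definition is_loop :: "nat \<Rightarrow> nat set set \<Rightarrow> bool" where
  "is_loop n Bs \<longleftrightarrow> n = 0 \<and> Bs = {{}}"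

definition is_coloop :: "nat \<Rightarrow> nat set set \<Rightarrow> bool" where
  "is_coloop n Bs \<longleftrightarrow> n = 0 \<and> Bs = {{0}}"

text \<open>B_sigma(M): the lexicographically first basis for the order
  sigma(0) < ... < sigma(n); a basis is encoded by the increasing list of
  positions of its elements in this order, and lists are compared lexicographically.\<close>
definition lexfirst_basis :: "(nat \<Rightarrow> nat) \<Rightarrow> nat set set \<Rightarrow> nat set" where
  "lexfirst_basis \<sigma> Bs = arg_min (\<lambda>B. sorted_list_of_set (inv \<sigma> ` B)) (\<lambda>B. B \<in> Bs)"

text \<open>Elementary symmetric function e_k of the values x i, i in A (degree-k part of
  the total Chern class with Chern roots x i).\<close>
definition elem_sym :: "nat \<Rightarrow> nat set \<Rightarrow> (nat \<Rightarrow> real) \<Rightarrow> real" where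
  "elem_sym k A x = (\<Sum>S\<in>{S. S \<subseteq> A \<and> card S = k}. \<Prod>i\<in>S. x i)"

text \<open>Integral over X_E of an equivariant class given by its restrictions f sigma t to the
  fixed points p_sigma, via Atiyah--Bott localization: the tangent weights at p_sigma
  are t(sigma i) - t(sigma (i+1)), i < n.\<close>
definition perm_integral :: "nat \<Rightarrow> ((nat \<Rightarrow> nat) \<Rightarrow> (nat \<Rightarrow> real) \<Rightarrow> real) \<Rightarrow> (nat \<Rightarrow> real) \<Rightarrow> real" where
  "perm_integral n f t = (\<Sum>\<sigma>\<in>{\<sigma>. \<sigma> permutes {..n}}.
       f \<sigma> t / (\<Prod>i<n. t (\<sigma> i) - t (\<sigma> (Suc i))))"

text \<open>Degree-n part of c(Q_M) at p_sigma: Chern roots -t_i (character T_i^-1), i not in B_sigma(M).\<close>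
definition cQ_top :: "nat \<Rightarrow> nat set set \<Rightarrow> (nat \<Rightarrow> nat) \<Rightarrow> (nat \<Rightarrow> real) \<Rightarrow> real" where
  "cQ_top n Bs \<sigma> t = elem_sym n ({..n} - lexfirst_basis \<sigma> Bs) (\<lambda>i. - t i)"

text \<open>Degree-n part of c(S_M dual) at p_sigma: Chern roots t_i (character T_i), i in B_sigma(M).\<close>
definition cSdual_top :: "nat \<Rightarrow> nat set set \<Rightarrow> (nat \<Rightarrow> nat) \<Rightarrow> (nat \<Rightarrow> real) \<Rightarrow> real" where
  "cSdual_top n Bs \<sigma> t = elem_sym n (lexfirst_basis \<sigma> Bs) t"

end

theory Submission
  imports Defs "HOL-Combinatorics.Multiset_Permutations"
begin

text \<open>By localization, each integral is a sum over the orderings sigma of E of the integrand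
  at p_sigma divided by the tangent weights (t_sigma(0) - t_sigma(1)) ... (t_sigma(n-1) - t_sigma(n)).
  The degree-n part of c(Q_M) is an elementary symmetric function of n + 1 - r roots, so it
  vanishes for r \<ge> 2; dually, c(S_M dual) only contributes for r \<ge> n. For r = 0 (resp. r = n + 1)
  the integrand is constant, and its integral vanishes for n > 0 since
  sum_v 1 / prod_(w ~= v) (t_v - t_w) = 0. For r = 1, B_sigma(M) = {a} with a the first non-loop
  of sigma. Splitting an ordering into its head and its tail, and summing out the tail by the
  partial fraction identity sum_sigma 1 / ((z - x_sigma(1)) (x_sigma(1) - x_sigma(2)) ...) = 1 / prod_i (z - x_i),
  an integrand g(a) integrates to sum_a g(a) / prod_(w ~= a) (t_a - t_w) if every element is a non-loop,
  and to 0 otherwise. For g(a) = prod_(w ~= a) (-t_w) this is Lagrange interpolation of the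
  constant 1 at 0. For r = n, B_sigma(M) = E - {c} with c the last non-coloop of sigma, and the
  same computation applies to the reversed ordering, whose tangent weights differ by (-1)^n.\<close>

section \<open>Partial fractions and Lagrange interpolation\<close>

lemma partial_fraction_two_poles:
  fixes z a b c :: real
  assumes "z \<noteq> a" "z \<noteq> b" "a \<noteq> b" "c \<noteq> 0"
  shows "1 / ((z - a) * ((a - b) * c)) = 1 / (z - b) * (1 / ((z - a) * c) - 1 / ((b - a) * c))"
proof -
  have "z - a \<noteq> 0" "z - b \<noteq> 0" "a - b \<noteq> 0" "b - a \<noteq> 0"
    using assms by auto
  with \<open>c \<noteq> 0\<close> show ?thesis
    by (simp add: divide_simps) (simp add: algebra_simps)
qed

lemma partial_fraction_expansion:
  fixes t :: "nat \<Rightarrow> real"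
  assumes "finite R" "R \<noteq> {}" "inj_on t R" "z \<notin> t ` R"
  shows "(\<Sum>v\<in>R. 1 / ((z - t v) * (\<Prod>w\<in>R - {v}. t v - t w))) = 1 / (\<Prod>w\<in>R. z - t w)"
  using assms
proof (induction R arbitrary: z rule: finite_ne_induct)
  case (singleton x)
  then show ?case by simp
next
  case (insert p R)
  have tp: "t p \<notin> t ` R" and inj: "inj_on t R"
    using insert.hyps insert.prems by auto
  define c where "c v = (\<Prod>w\<in>R - {v}. t v - t w)" for v
  have c_nonzero: "c v \<noteq> 0" if "v \<in> R" for v
    using that inj insert.hyps by (auto simp: c_def prod_zero_iff inj_on_def)
  have split: "1 / ((z - t v) * (\<Prod>w\<in>insert p R - {v}. t v - t w))
      = 1 / (z - t p) * (1 / ((z - t v) * c v) - 1 / ((t p - t v) * c v))" if "v \<in> R" for v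
  proof -
    have "insert p R - {v} = insert p (R - {v})"
      using that insert.hyps by auto
    then have "(\<Prod>w\<in>insert p R - {v}. t v - t w) = (t v - t p) * c v"
      using insert.hyps by (simp add: c_def)
    moreover have "z \<noteq> t v" "t p \<noteq> t v" "z \<noteq> t p"
      using that tp insert.prems by auto
    ultimately show ?thesis
      using partial_fraction_two_poles c_nonzero[OF that] by simp
  qed
  have "(\<Sum>v\<in>insert p R. 1 / ((z - t v) * (\<Prod>w\<in>insert p R - {v}. t v - t w)))
      = 1 / ((z - t p) * (\<Prod>w\<in>R. t p - t w))
        + 1 / (z - t p) * ((\<Sum>v\<in>R. 1 / ((z - t v) * c v)) - (\<Sum>v\<in>R. 1 / ((t p - t v) * c v)))"
    using insert.hyps
    by (simp add: sum.cong[OF refl split] sum_divide_distrib sum_subtractf diff_divide_distrib)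
  also have "\<dots> = 1 / ((z - t p) * (\<Prod>w\<in>R. t p - t w))
        + 1 / (z - t p) * (1 / (\<Prod>w\<in>R. z - t w) - 1 / (\<Prod>w\<in>R. t p - t w))"
    using insert.IH[OF inj] insert.prems tp by (simp add: c_def)
  also have "\<dots> = 1 / (\<Prod>w\<in>insert p R. z - t w)"
  proof -
    have "1 / (y * B) + 1 / y * (1 / A - 1 / B) = 1 / (y * A)"
      if "y \<noteq> 0" "A \<noteq> 0" "B \<noteq> 0" for y A B :: real
      using that by (simp add: field_simps)
    moreover have "(\<Prod>w\<in>R. z - t w) \<noteq> 0" "(\<Prod>w\<in>R. t p - t w) \<noteq> 0" "z - t p \<noteq> 0"
      using insert.hyps insert.prems tp by (auto simp: prod_zero_iff)
    ultimately show ?thesis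
      using insert.hyps by simp
  qed
  finally show ?case .
qed

lemma sum_inverse_lagrange_denominators:
  fixes t :: "nat \<Rightarrow> real"
  assumes "finite U" "U \<noteq> {}" "p \<notin> U" "inj_on t (insert p U)"
  shows "(\<Sum>v\<in>insert p U. 1 / (\<Prod>w\<in>insert p U - {v}. t v - t w)) = 0"
proof -
  have inj: "inj_on t U" and tp: "t p \<notin> t ` U"
    using assms by auto
  have "1 / (\<Prod>w\<in>insert p U - {v}. t v - t w) = - (1 / ((t p - t v) * (\<Prod>w\<in>U - {v}. t v - t w)))"
    if "v \<in> U" for v
  proof -
    have "insert p U - {v} = insert p (U - {v})"
      using that assms by auto
    then have "(\<Prod>w\<in>insert p U - {v}. t v - t w) = - ((t p - t v) * (\<Prod>w\<in>U - {v}. t v - t w))"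
      using assms by (simp add: algebra_simps)
    then show ?thesis
      by simp
  qed
  then have "(\<Sum>v\<in>U. 1 / (\<Prod>w\<in>insert p U - {v}. t v - t w))
      = - (\<Sum>v\<in>U. 1 / ((t p - t v) * (\<Prod>w\<in>U - {v}. t v - t w)))"
    by (simp add: sum_negf)
  then show ?thesis
    using assms partial_fraction_expansion[OF assms(1,2) inj tp] by (simp add: insert_absorb)
qed

lemma lagrange_interpolation_one:
  fixes t :: "nat \<Rightarrow> real"
  assumes "finite U" "U \<noteq> {}" "inj_on t U"
  shows "(\<Sum>v\<in>U. (\<Prod>w\<in>U - {v}. z - t w) / (\<Prod>w\<in>U - {v}. t v - t w)) = 1"
proof (cases "z \<in> t ` U")
  case True
  then obtain u where u: "u \<in> U" "z = t u"
    by auto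
  have "(\<Prod>w\<in>U - {v}. z - t w) = 0" if "v \<in> U - {u}" for v
    using u that assms(1) by (auto simp: prod_zero_iff)
  then have "(\<Sum>v\<in>U - {u}. (\<Prod>w\<in>U - {v}. z - t w) / (\<Prod>w\<in>U - {v}. t v - t w)) = 0"
    by simp
  then have "(\<Sum>v\<in>U. (\<Prod>w\<in>U - {v}. z - t w) / (\<Prod>w\<in>U - {v}. t v - t w))
      = (\<Prod>w\<in>U - {u}. t u - t w) / (\<Prod>w\<in>U - {u}. t u - t w)"
    using assms(1) u by (simp add: sum.remove)
  moreover have "(\<Prod>w\<in>U - {u}. t u - t w) \<noteq> 0"
    using assms u by (auto simp: prod_zero_iff inj_on_def)
  ultimately show ?thesis
    by simp
next
  case False
  have "(\<Prod>w\<in>U - {v}. z - t w) / (\<Prod>w\<in>U - {v}. t v - t w)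
      = (\<Prod>w\<in>U. z - t w) * (1 / ((z - t v) * (\<Prod>w\<in>U - {v}. t v - t w)))" if "v \<in> U" for v
  proof -
    have "(\<Prod>w\<in>U. z - t w) = (z - t v) * (\<Prod>w\<in>U - {v}. z - t w)"
      using that assms(1) by (simp add: prod.remove)
    moreover have "z - t v \<noteq> 0"
      using False that by auto
    ultimately show ?thesis
      by simp
  qed
  then have "(\<Sum>v\<in>U. (\<Prod>w\<in>U - {v}. z - t w) / (\<Prod>w\<in>U - {v}. t v - t w))
      = (\<Prod>w\<in>U. z - t w) * (1 / (\<Prod>w\<in>U. z - t w))"
    by (simp add: sum_distrib_left[symmetric] partial_fraction_expansion[OF assms False]
        del: times_divide_eq_right)
  also have "\<dots> = 1"
    using False assms(1) by (auto simp: prod_zero_iff)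
  finally show ?thesis .
qed

section \<open>Sums over orderings\<close>

fun chain_prod :: "real list \<Rightarrow> real" where
  "chain_prod (x # y # ys) = (x - y) * chain_prod (y # ys)"
| "chain_prod _ = 1"

lemma chain_prod_map_upt: "chain_prod (map h [0..<Suc n]) = (\<Prod>i<n. h i - h (Suc i))"
proof (induction n arbitrary: h)
  case 0
  then show ?case by simp
next
  case (Suc n)
  have "map h [0..<Suc (Suc n)] = h 0 # h (Suc 0) # map (\<lambda>i. h (Suc (Suc i))) [0..<n]"
    by (simp add: map_upt_Suc del: upt_Suc)
  moreover have "map (\<lambda>i. h (Suc i)) [0..<Suc n] = h (Suc 0) # map (\<lambda>i. h (Suc (Suc i))) [0..<n]"
    by (simp add: map_upt_Suc del: upt_Suc)
  ultimately show ?case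
    using Suc[of "\<lambda>i. h (Suc i)"] by (simp add: prod.lessThan_Suc_shift del: upt_Suc prod.lessThan_Suc)
qed

lemma chain_prod_snoc: "chain_prod (xs @ [a, b]) = chain_prod (xs @ [a]) * (a - b)"
  by (induction xs rule: induct_list012) auto

lemma chain_prod_rev: "chain_prod (rev xs) = (-1) ^ (length xs - 1) * chain_prod xs"
proof (induction xs rule: induct_list012)
  case (3 x y zs)
  have "chain_prod (rev (x # y # zs)) = chain_prod (rev (y # zs)) * (y - x)"
    using chain_prod_snoc[of "rev zs" y x] by simp
  also have "\<dots> = (-1) ^ length zs * chain_prod (y # zs) * (y - x)"
    using 3(2) by simp
  finally show ?case
    by (simp add: algebra_simps)
qed auto

lemma sum_permutations_of_set_Cons:
  assumes "finite V" "V \<noteq> {}"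
  shows "(\<Sum>xs\<in>permutations_of_set V. f xs)
       = (\<Sum>v\<in>V. \<Sum>ys\<in>permutations_of_set (V - {v}). f (v # ys))"
proof -
  have "(\<Sum>xs\<in>permutations_of_set V. f xs)
      = (\<Sum>v\<in>V. \<Sum>xs\<in>(#) v ` permutations_of_set (V - {v}). f xs)"
    using assms by (subst permutations_of_set_nonempty[OF assms(2)], subst sum.UNION_disjoint) auto
  also have "\<dots> = (\<Sum>v\<in>V. \<Sum>ys\<in>permutations_of_set (V - {v}). f (v # ys))"
    by (simp add: sum.reindex)
  finally show ?thesis .
qed

lemma sum_permutations_inverse_chain_prod:
  fixes t :: "nat \<Rightarrow> real"
  assumes "finite R" "inj_on t R" "z \<notin> t ` R"
  shows "(\<Sum>xs\<in>permutations_of_set R. 1 / chain_prod (z # map t xs)) = 1 / (\<Prod>w\<in>R. z - t w)"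
  using assms
proof (induction R arbitrary: z rule: finite_remove_induct)
  case empty
  then show ?case by simp
next
  case (remove R)
  have inner: "(\<Sum>ys\<in>permutations_of_set (R - {v}). 1 / chain_prod (z # t v # map t ys))
      = 1 / ((z - t v) * (\<Prod>w\<in>R - {v}. t v - t w))" if "v \<in> R" for v
  proof -
    have "inj_on t (R - {v})" "t v \<notin> t ` (R - {v})"
      using remove.prems that by (auto simp: inj_on_def)
    then have "(\<Sum>ys\<in>permutations_of_set (R - {v}). 1 / chain_prod (t v # map t ys))
        = 1 / (\<Prod>w\<in>R - {v}. t v - t w)"
      by (rule remove.IH[OF that])
    moreover have "(\<Sum>ys\<in>permutations_of_set (R - {v}). 1 / chain_prod (z # t v # map t ys))
        = (\<Sum>ys\<in>permutations_of_set (R - {v}). 1 / chain_prod (t v # map t ys)) / (z - t v)"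
      by (simp add: sum_divide_distrib mult.commute)
    ultimately show ?thesis
      by (simp add: mult.commute)
  qed
  have "(\<Sum>xs\<in>permutations_of_set R. 1 / chain_prod (z # map t xs))
      = (\<Sum>v\<in>R. 1 / ((z - t v) * (\<Prod>w\<in>R - {v}. t v - t w)))"
    unfolding sum_permutations_of_set_Cons[OF remove(1,2)]
    by (rule sum.cong[OF refl]) (simp only: list.map inner)
  also have "\<dots> = 1 / (\<Prod>w\<in>R. z - t w)"
    using partial_fraction_expansion[OF remove(1,2)] remove.prems by blast
  finally show ?case .
qed

lemma sum_partial_fractions_regroup:
  fixes t h g :: "nat \<Rightarrow> real"
  assumes "finite A" "finite D" "A \<inter> D = {}"
  shows "(\<Sum>v\<in>A. h v * (g v / (\<Prod>w\<in>A \<union> D - {v}. t v - t w)))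
       + (\<Sum>v\<in>D. h v * ((\<Sum>a\<in>A. g a / ((t v - t a) * (\<Prod>w\<in>A - {a}. t a - t w)))
                             / (\<Prod>w\<in>D - {v}. t v - t w)))
       = (\<Sum>a\<in>A. g a / (\<Prod>w\<in>A - {a}. t a - t w)
                   * (\<Sum>v\<in>insert a D. h v / (\<Prod>w\<in>insert a D - {v}. t v - t w)))"
proof -
  define c where "c a = (\<Prod>w\<in>A - {a}. t a - t w)" for a
  have inner: "(\<Sum>v\<in>insert a D. h v / (\<Prod>w\<in>insert a D - {v}. t v - t w))
      = h a / (\<Prod>w\<in>D. t a - t w) + (\<Sum>v\<in>D. h v / ((t v - t a) * (\<Prod>w\<in>D - {v}. t v - t w)))"
    if "a \<in> A" for a
  proof -
    have a: "a \<notin> D"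
      using that assms(3) by auto
    have "(\<Prod>w\<in>insert a D - {v}. t v - t w) = (t v - t a) * (\<Prod>w\<in>D - {v}. t v - t w)"
      if "v \<in> D" for v
    proof -
      have "insert a D - {v} = insert a (D - {v})"
        using that a by auto
      then show ?thesis
        using a assms(2) by simp
    qed
    moreover have "insert a D - {a} = D"
      using a by auto
    ultimately show ?thesis
      using a assms(2) by simp
  qed
  have "(\<Prod>w\<in>A \<union> D - {v}. t v - t w) = c v * (\<Prod>w\<in>D. t v - t w)" if "v \<in> A" for v
  proof -
    have "A \<union> D - {v} = (A - {v}) \<union> D" "(A - {v}) \<inter> D = {}"
      using that assms(3) by auto
    then show ?thesis
      using assms(1,2) by (simp add: c_def prod.union_disjoint)
  qed
  then have A_part: "(\<Sum>v\<in>A. h v * (g v / (\<Prod>w\<in>A \<union> D - {v}. t v - t w)))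
      = (\<Sum>a\<in>A. g a / c a * (h a / (\<Prod>w\<in>D. t a - t w)))"
    by (intro sum.cong refl) (simp add: divide_inverse ac_simps)
  have "(\<Sum>v\<in>D. h v * ((\<Sum>a\<in>A. g a / ((t v - t a) * c a)) / (\<Prod>w\<in>D - {v}. t v - t w)))
      = (\<Sum>v\<in>D. \<Sum>a\<in>A. g a / c a * (h v / ((t v - t a) * (\<Prod>w\<in>D - {v}. t v - t w))))"
    unfolding sum_distrib_left sum_divide_distrib
    by (intro sum.cong refl) (simp add: divide_inverse ac_simps)
  also have "\<dots> = (\<Sum>a\<in>A. \<Sum>v\<in>D. g a / c a * (h v / ((t v - t a) * (\<Prod>w\<in>D - {v}. t v - t w))))"
    by (rule sum.swap)
  finally show ?thesis
    using A_part by (simp add: inner c_def distrib_left sum.distrib sum_distrib_left)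
qed

text \<open>The hypothesis is the statement of sum_permutations_find_chain_prod_Cons for \<open>V - {v}\<close>
  and \<open>z = t v\<close>; taking it as an assumption lets the lemma serve both in the induction proving
  that statement and afterwards.\<close>

lemma sum_permutations_split_head:
  fixes t h g :: "nat \<Rightarrow> real"
  assumes "finite V" "A \<subseteq> V" "A \<noteq> {}" "inj_on t V"
    and tail: "\<And>v. v \<in> V - A \<Longrightarrow>
      (\<Sum>ys\<in>permutations_of_set (V - {v}). g (the (find (\<lambda>x. x \<in> A) ys)) / chain_prod (t v # map t ys))
      = (\<Sum>a\<in>A. g a / ((t v - t a) * (\<Prod>w\<in>A - {a}. t a - t w))) / (\<Prod>w\<in>V - A - {v}. t v - t w)"
  shows "(\<Sum>xs\<in>permutations_of_set V. h (hd xs) * (g (the (find (\<lambda>x. x \<in> A) xs)) / chain_prod (map t xs)))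
       = (\<Sum>a\<in>A. g a / (\<Prod>w\<in>A - {a}. t a - t w)
                   * (\<Sum>v\<in>insert a (V - A). h v / (\<Prod>w\<in>insert a (V - A) - {v}. t v - t w)))"
proof -
  define F where "F v = (\<Sum>ys\<in>permutations_of_set (V - {v}).
      g (the (find (\<lambda>x. x \<in> A) (v # ys))) / chain_prod (t v # map t ys))" for v
  have head: "F v = g v / (\<Prod>w\<in>V - {v}. t v - t w)" if "v \<in> A" for v
  proof -
    have "inj_on t (V - {v})" "t v \<notin> t ` (V - {v})"
      using assms(2,4) that by (auto simp: inj_on_def)
    then have "(\<Sum>ys\<in>permutations_of_set (V - {v}). 1 / chain_prod (t v # map t ys))
        = 1 / (\<Prod>w\<in>V - {v}. t v - t w)"
      using assms(1) by (intro sum_permutations_inverse_chain_prod) auto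
    moreover have "F v = g v * (\<Sum>ys\<in>permutations_of_set (V - {v}). 1 / chain_prod (t v # map t ys))"
      unfolding F_def sum_distrib_left using that by simp
    ultimately show ?thesis
      by simp
  qed
  have V: "V = A \<union> (V - A)" "A \<inter> (V - A) = {}" "V \<noteq> {}"
    using assms(2,3) by auto
  have "(\<Sum>xs\<in>permutations_of_set V. h (hd xs) * (g (the (find (\<lambda>x. x \<in> A) xs)) / chain_prod (map t xs)))
      = (\<Sum>v\<in>V. h v * F v)"
    unfolding sum_permutations_of_set_Cons[OF assms(1) V(3)] by (simp add: F_def sum_distrib_left)
  also have "\<dots> = (\<Sum>v\<in>A. h v * F v) + (\<Sum>v\<in>V - A. h v * F v)"
    using assms(1) V by (metis finite_Un sum.union_disjoint)
  also have "\<dots> = (\<Sum>v\<in>A. h v * (g v / (\<Prod>w\<in>A \<union> (V - A) - {v}. t v - t w)))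
      + (\<Sum>v\<in>V - A. h v * ((\<Sum>a\<in>A. g a / ((t v - t a) * (\<Prod>w\<in>A - {a}. t a - t w)))
                               / (\<Prod>w\<in>V - A - {v}. t v - t w)))"
    using head tail V(1) by (simp add: F_def)
  also have "\<dots> = (\<Sum>a\<in>A. g a / (\<Prod>w\<in>A - {a}. t a - t w)
                   * (\<Sum>v\<in>insert a (V - A). h v / (\<Prod>w\<in>insert a (V - A) - {v}. t v - t w)))"
    using assms(1,2) by (intro sum_partial_fractions_regroup) (auto intro: finite_subset)
  finally show ?thesis .
qed

lemma sum_permutations_find_chain_prod_Cons:
  fixes t g :: "nat \<Rightarrow> real"
  assumes "finite V" "A \<subseteq> V" "A \<noteq> {}" "inj_on t V" "z \<notin> t ` V"
  shows "(\<Sum>xs\<in>permutations_of_set V. g (the (find (\<lambda>x. x \<in> A) xs)) / chain_prod (z # map t xs))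
       = (\<Sum>a\<in>A. g a / ((z - t a) * (\<Prod>w\<in>A - {a}. t a - t w))) / (\<Prod>w\<in>V - A. z - t w)"
  using assms
proof (induction V arbitrary: z rule: finite_remove_induct)
  case empty
  then show ?case by simp
next
  case (remove V)
  define D where "D = V - A"
  have tail: "(\<Sum>ys\<in>permutations_of_set (V - {v}). g (the (find (\<lambda>x. x \<in> A) ys)) / chain_prod (t v # map t ys))
      = (\<Sum>a\<in>A. g a / ((t v - t a) * (\<Prod>w\<in>A - {a}. t a - t w))) / (\<Prod>w\<in>V - A - {v}. t v - t w)"
    if "v \<in> V - A" for v
  proof -
    have "V - {v} - A = V - A - {v}"
      by auto
    moreover have "A \<subseteq> V - {v}" "inj_on t (V - {v})" "t v \<notin> t ` (V - {v})"
      using that remove.prems by (auto simp: inj_on_def)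
    ultimately show ?thesis
      using that remove.IH[of v "t v"] remove.prems(2) by simp
  qed
  have "chain_prod (z # map t xs) = (z - t (hd xs)) * chain_prod (map t xs)"
    if "xs \<in> permutations_of_set V" for xs
    using that remove(2) by (cases xs) (auto dest: permutations_of_setD)
  then have "(\<Sum>xs\<in>permutations_of_set V. g (the (find (\<lambda>x. x \<in> A) xs)) / chain_prod (z # map t xs))
      = (\<Sum>xs\<in>permutations_of_set V. 1 / (z - t (hd xs)) * (g (the (find (\<lambda>x. x \<in> A) xs)) / chain_prod (map t xs)))"
    by (intro sum.cong refl) simp
  also have "\<dots> = (\<Sum>a\<in>A. g a / (\<Prod>w\<in>A - {a}. t a - t w)
                   * (\<Sum>v\<in>insert a D. 1 / (z - t v) / (\<Prod>w\<in>insert a D - {v}. t v - t w)))"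
    unfolding D_def using remove.hyps remove.prems tail by (intro sum_permutations_split_head) auto
  also have "\<dots> = (\<Sum>a\<in>A. g a / (\<Prod>w\<in>A - {a}. t a - t w) * (1 / (\<Prod>w\<in>insert a D. z - t w)))"
  proof (intro sum.cong refl arg_cong2[where f = "(*)"])
    fix a assume "a \<in> A"
    then have "insert a D \<subseteq> V"
      using remove.prems by (auto simp: D_def)
    then have "inj_on t (insert a D)" "z \<notin> t ` insert a D"
      using remove.prems inj_on_subset by blast+
    moreover have "finite (insert a D)"
      using remove.hyps by (simp add: D_def)
    ultimately show "(\<Sum>v\<in>insert a D. 1 / (z - t v) / (\<Prod>w\<in>insert a D - {v}. t v - t w))
        = 1 / (\<Prod>w\<in>insert a D. z - t w)"
      using partial_fraction_expansion[of "insert a D" t z] by simp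
  qed
  also have "\<dots> = (\<Sum>a\<in>A. g a / ((z - t a) * (\<Prod>w\<in>A - {a}. t a - t w))) / (\<Prod>w\<in>V - A. z - t w)"
    using remove.hyps by (simp add: D_def sum_divide_distrib mult_ac)
  finally show ?case .
qed

lemma sum_permutations_find_chain_prod:
  fixes t g :: "nat \<Rightarrow> real"
  assumes "finite V" "A \<subseteq> V" "A \<noteq> {}" "inj_on t V"
  shows "(\<Sum>xs\<in>permutations_of_set V. g (the (find (\<lambda>x. x \<in> A) xs)) / chain_prod (map t xs))
       = (if V = A then (\<Sum>a\<in>A. g a / (\<Prod>w\<in>A - {a}. t a - t w)) else 0)"
proof -
  have tail: "(\<Sum>ys\<in>permutations_of_set (V - {v}). g (the (find (\<lambda>x. x \<in> A) ys)) / chain_prod (t v # map t ys))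
      = (\<Sum>a\<in>A. g a / ((t v - t a) * (\<Prod>w\<in>A - {a}. t a - t w))) / (\<Prod>w\<in>V - A - {v}. t v - t w)"
    if "v \<in> V - A" for v
  proof -
    have "V - {v} - A = V - A - {v}"
      by auto
    moreover have "A \<subseteq> V - {v}" "inj_on t (V - {v})" "t v \<notin> t ` (V - {v})"
      using that assms by (auto simp: inj_on_def)
    ultimately show ?thesis
      using assms(1,3) by (simp add: sum_permutations_find_chain_prod_Cons)
  qed
  have "(\<Sum>xs\<in>permutations_of_set V. g (the (find (\<lambda>x. x \<in> A) xs)) / chain_prod (map t xs))
      = (\<Sum>a\<in>A. g a / (\<Prod>w\<in>A - {a}. t a - t w)
                   * (\<Sum>v\<in>insert a (V - A). 1 / (\<Prod>w\<in>insert a (V - A) - {v}. t v - t w)))"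
    using sum_permutations_split_head[OF assms tail, of "\<lambda>_. 1"] by simp
  also have "\<dots> = (if V = A then (\<Sum>a\<in>A. g a / (\<Prod>w\<in>A - {a}. t a - t w)) else 0)"
  proof (cases "V = A")
    case False
    then have "V - A \<noteq> {}"
      using assms(2) by auto
    moreover have "inj_on t (insert a (V - A))" if "a \<in> A" for a
      using that assms(2) by (intro inj_on_subset[OF assms(4)]) auto
    ultimately have "\<forall>a\<in>A. (\<Sum>v\<in>insert a (V - A). 1 / (\<Prod>w\<in>insert a (V - A) - {v}. t v - t w)) = 0"
      using assms(1) by (blast intro: sum_inverse_lagrange_denominators)
    then show ?thesis
      using False by simp
  qed simp
  finally show ?thesis .
qed

section \<open>Localization on the permutohedral variety\<close>

lemma bij_betw_permutes_permutations_of_set: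
  "bij_betw (\<lambda>\<sigma>. map \<sigma> [0..<Suc n]) {\<sigma>. \<sigma> permutes {..n}} (permutations_of_set {..n})"
proof (rule bij_betwI')
  fix \<sigma> \<tau> assume \<sigma>: "\<sigma> \<in> {\<sigma>. \<sigma> permutes {..n}}" and \<tau>: "\<tau> \<in> {\<sigma>. \<sigma> permutes {..n}}"
  show "(map \<sigma> [0..<Suc n] = map \<tau> [0..<Suc n]) = (\<sigma> = \<tau>)"
  proof
    assume eq: "map \<sigma> [0..<Suc n] = map \<tau> [0..<Suc n]"
    show "\<sigma> = \<tau>"
    proof
      fix x
      show "\<sigma> x = \<tau> x"
      proof (cases "x \<le> n")
        case True
        then show ?thesis
          using arg_cong[OF eq, of "\<lambda>xs. xs ! x"] by (simp del: upt_Suc)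
      next
        case False
        then show ?thesis
          using \<sigma> \<tau> by (simp add: permutes_not_in)
      qed
    qed
  qed simp
next
  fix \<sigma> assume "\<sigma> \<in> {\<sigma>. \<sigma> permutes {..n}}"
  moreover have "{0..<Suc n} = {..n}"
    by auto
  ultimately show "map \<sigma> [0..<Suc n] \<in> permutations_of_set {..n}"
    by (auto simp: distinct_map permutes_inj_on permutes_image simp del: upt_Suc)
next
  fix xs assume xs: "xs \<in> permutations_of_set {..n}"
  then have len: "length xs = Suc n" and "distinct xs" "set xs = {..n}"
    by (auto dest: permutations_of_setD length_finite_permutations_of_set)
  define \<sigma> where "\<sigma> i = (if i \<le> n then xs ! i else i)" for i
  have "\<sigma> ` {..n} = set xs"
    using len by (auto simp: \<sigma>_def set_conv_nth image_def less_Suc_eq_le)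
  moreover have "inj_on \<sigma> {..n}"
    using \<open>distinct xs\<close> len by (auto simp: inj_on_def \<sigma>_def nth_eq_iff_index_eq)
  ultimately have "\<sigma> permutes {..n}"
    using \<open>set xs = {..n}\<close> by (intro bij_imp_permutes) (auto simp: bij_betw_def \<sigma>_def)
  moreover have "map \<sigma> [0..<Suc n] = xs"
    using len by (intro nth_equalityI) (auto simp: \<sigma>_def simp del: upt_Suc)
  ultimately show "\<exists>\<sigma>\<in>{\<sigma>. \<sigma> permutes {..n}}. xs = map \<sigma> [0..<Suc n]"
    by auto
qed

lemma perm_integral_eq_sum_permutations_of_set:
  assumes "\<And>\<sigma>. \<sigma> permutes {..n} \<Longrightarrow> f \<sigma> t = F (map \<sigma> [0..<Suc n])"
  shows "perm_integral n f t = (\<Sum>xs\<in>permutations_of_set {..n}. F xs / chain_prod (map t xs))"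
proof -
  have "perm_integral n f t
      = (\<Sum>\<sigma>\<in>{\<sigma>. \<sigma> permutes {..n}}. F (map \<sigma> [0..<Suc n]) / chain_prod (map t (map \<sigma> [0..<Suc n])))"
    unfolding perm_integral_def
    using assms chain_prod_map_upt[of "\<lambda>i. t (\<sigma> i)" n for \<sigma>]
    by (intro sum.cong refl) (simp add: comp_def del: upt_Suc)
  also have "\<dots> = (\<Sum>xs\<in>permutations_of_set {..n}. F xs / chain_prod (map t xs))"
    by (rule sum.reindex_bij_betw[OF bij_betw_permutes_permutations_of_set])
  finally show ?thesis .
qed

lemma perm_integral_find:
  fixes t g :: "nat \<Rightarrow> real"
  assumes "A \<subseteq> {..n}" "A \<noteq> {}" "inj_on t {..n}"
    and "\<And>\<sigma>. \<sigma> permutes {..n} \<Longrightarrow> f \<sigma> t = g (the (find (\<lambda>x. x \<in> A) (map \<sigma> [0..<Suc n])))"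
  shows "perm_integral n f t
       = (if A = {..n} then (\<Sum>a\<in>A. g a / (\<Prod>w\<in>A - {a}. t a - t w)) else 0)"
  using perm_integral_eq_sum_permutations_of_set[where n = n and f = f and t = t
      and F = "\<lambda>xs. g (the (find (\<lambda>x. x \<in> A) xs))", OF assms(4)]
    sum_permutations_find_chain_prod[OF finite_atMost assms(1-3)]
  by auto

lemma perm_integral_find_rev:
  fixes t g :: "nat \<Rightarrow> real"
  assumes "A \<subseteq> {..n}" "A \<noteq> {}" "inj_on t {..n}"
    and "\<And>\<sigma>. \<sigma> permutes {..n} \<Longrightarrow> f \<sigma> t = g (the (find (\<lambda>x. x \<in> A) (rev (map \<sigma> [0..<Suc n]))))"
  shows "perm_integral n f t
       = (-1) ^ n * (if A = {..n} then (\<Sum>a\<in>A. g a / (\<Prod>w\<in>A - {a}. t a - t w)) else 0)"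
proof -
  let ?P = "permutations_of_set {..n}"
  have "perm_integral n f t = (\<Sum>xs\<in>?P. g (the (find (\<lambda>x. x \<in> A) (rev xs))) / chain_prod (map t xs))"
    using assms(4) by (rule perm_integral_eq_sum_permutations_of_set)
  also have "\<dots> = (\<Sum>xs\<in>?P. g (the (find (\<lambda>x. x \<in> A) xs)) / chain_prod (map t (rev xs)))"
  proof -
    have "bij_betw rev ?P ?P"
      by (intro bij_betw_imageI) (simp_all add: inj_on_def)
    from sum.reindex_bij_betw[OF this,
        of "\<lambda>ys. g (the (find (\<lambda>x. x \<in> A) ys)) / chain_prod (map t (rev ys))"]
    show ?thesis
      by simp
  qed
  also have "\<dots> = (-1) ^ n * (\<Sum>xs\<in>?P. g (the (find (\<lambda>x. x \<in> A) xs)) / chain_prod (map t xs))"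
  proof -
    have "y / ((-1) ^ n * w) = (-1) ^ n * y / w" for y w :: real
      by (cases "even n") simp_all
    then show ?thesis
      unfolding sum_distrib_left
      by (intro sum.cong refl)
         (auto simp: rev_map[symmetric] chain_prod_rev length_finite_permutations_of_set)
  qed
  finally show ?thesis
    using sum_permutations_find_chain_prod[OF finite_atMost assms(1-3)] by simp
qed

lemma perm_integral_const:
  fixes t :: "nat \<Rightarrow> real"
  assumes "inj_on t {..n}" "\<And>\<sigma>. \<sigma> permutes {..n} \<Longrightarrow> f \<sigma> t = K"
  shows "perm_integral n f t = (if n = 0 then K else 0)"
proof -
  have "perm_integral n f t = (\<Sum>a\<in>{..n}. K / (\<Prod>w\<in>{..n} - {a}. t a - t w))"
    using assms by (subst perm_integral_find[where g = "\<lambda>_. K" and A = "{..n}"]) auto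
  also have "\<dots> = K * (\<Sum>a\<in>{..n}. 1 / (\<Prod>w\<in>{..n} - {a}. t a - t w))"
    by (simp add: sum_distrib_left)
  also have "\<dots> = (if n = 0 then K else 0)"
  proof (cases n)
    case (Suc m)
    have "{..n} = insert 0 {Suc 0..n}"
      by auto
    then show ?thesis
      using Suc assms(1) sum_inverse_lagrange_denominators[of "{Suc 0..n}" 0 t] by simp
  qed simp
  finally show ?thesis .
qed

section \<open>Lexicographically first bases\<close>

lemma arg_min_eqI:
  fixes f :: "'a \<Rightarrow> 'b::order"
  assumes "P x" "\<And>y. P y \<Longrightarrow> y \<noteq> x \<Longrightarrow> f x < f y"
  shows "arg_min f P = x"
  unfolding arg_min_def
proof (rule some_equality)
  show "is_arg_min f P x"
    using assms by (auto simp: is_arg_min_def dest: less_asym)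
next
  fix y assume "is_arg_min f P y"
  then show "y = x"
    using assms by (auto simp: is_arg_min_def)
qed

lemma find_map_upt_Some:
  assumes "k \<le> n" "f k \<in> A"
  obtains i where "i \<le> n" "f i \<in> A" "\<And>j. j < i \<Longrightarrow> f j \<notin> A"
    "find (\<lambda>x. x \<in> A) (map f [0..<Suc n]) = Some (f i)"
proof -
  have "find (\<lambda>x. x \<in> A) (map f [0..<Suc n]) \<noteq> None"
    using assms by (auto simp: find_None_iff simp del: upt_Suc)
  then obtain x where x: "find (\<lambda>x. x \<in> A) (map f [0..<Suc n]) = Some x"
    by blast
  then obtain i where i: "i < Suc n" "map f [0..<Suc n] ! i \<in> A"
    "\<forall>j<i. map f [0..<Suc n] ! j \<notin> A" "x = map f [0..<Suc n] ! i"
    unfolding find_Some_iff by auto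
  have nth: "map f [0..<Suc n] ! j = f j" if "j \<le> n" for j
    using that by (simp del: upt_Suc)
  show ?thesis
  proof (rule that[of i])
    show "\<And>j. j < i \<Longrightarrow> f j \<notin> A"
      using i nth by (metis less_Suc_eq_le order.strict_trans)
  qed (use i x nth in auto)
qed

lemma append_Cons_less_append_Cons: "(a::nat) < b \<Longrightarrow> u @ a # x < u @ b # y"
  by (induction u) auto

lemma sorted_list_of_set_atMost_remove_less:
  fixes j k n :: nat
  assumes "j < k" "k \<le> n"
  shows "sorted_list_of_set ({..n} - {k}) < sorted_list_of_set ({..n} - {j})"
proof -
  have remove: "sorted_list_of_set ({..n} - {i}) = [0..<i] @ [Suc i..<Suc n]" if "i \<le> n" for i
    using that by (intro sorted_distinct_set_unique) (auto simp: sorted_append)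
  have "[0..<k] @ [Suc k..<Suc n] = [0..<j] @ j # ([Suc j..<k] @ [Suc k..<Suc n])"
    using assms upt_add_eq_append[of 0 j "k - j"] upt_conv_Cons[of j k] by simp
  moreover have "[0..<j] @ [Suc j..<Suc n] = [0..<j] @ Suc j # [Suc (Suc j)..<Suc n]"
    using assms upt_conv_Cons[of "Suc j" "Suc n"] by simp
  ultimately show ?thesis
    using assms remove append_Cons_less_append_Cons[of j "Suc j" "[0..<j]"] by simp
qed

lemma permutes_atMost_inv:
  assumes "\<sigma> permutes {..n}" "a \<le> n"
  shows "inv \<sigma> a \<le> n" "\<sigma> (inv \<sigma> a) = a"
  using assms permutes_in_image[OF permutes_inv[OF assms(1)]] permutes_inverses(1)[OF assms(1)]
  by auto

lemma lexfirst_basis_in: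
  assumes "finite Bs" "Bs \<noteq> {}"
  shows "lexfirst_basis \<sigma> Bs \<in> Bs"
  using arg_min_if_finite(1)[OF assms] by (simp add: lexfirst_basis_def arg_min_on_def)

lemma lexfirst_basis_singletons:
  assumes \<sigma>: "\<sigma> permutes {..n}" and "A \<subseteq> {..n}" "A \<noteq> {}"
  shows "lexfirst_basis \<sigma> ((\<lambda>a. {a}) ` A) = {the (find (\<lambda>x. x \<in> A) (map \<sigma> [0..<Suc n]))}"
proof -
  obtain a where "a \<in> A"
    using assms(3) by blast
  then have "inv \<sigma> a \<le> n" "\<sigma> (inv \<sigma> a) \<in> A"
    using assms(2) permutes_atMost_inv[OF \<sigma>, of a] by auto
  then obtain i where i: "i \<le> n" "\<sigma> i \<in> A" "\<And>j. j < i \<Longrightarrow> \<sigma> j \<notin> A"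
    and find: "find (\<lambda>x. x \<in> A) (map \<sigma> [0..<Suc n]) = Some (\<sigma> i)"
    by (rule find_map_upt_Some) blast
  have "arg_min (\<lambda>B. sorted_list_of_set (inv \<sigma> ` B)) (\<lambda>B. B \<in> (\<lambda>a. {a}) ` A) = {\<sigma> i}"
  proof (rule arg_min_eqI)
    fix B assume "B \<in> (\<lambda>a. {a}) ` A" "B \<noteq> {\<sigma> i}"
    then obtain b where b: "B = {b}" "b \<in> A" "b \<noteq> \<sigma> i"
      by blast
    have "inv \<sigma> b \<le> n" "\<sigma> (inv \<sigma> b) = b"
      using b(2) assms(2) permutes_atMost_inv[OF \<sigma>] by auto
    then have "inv \<sigma> b \<noteq> i" "\<not> inv \<sigma> b < i"
      using b(2,3) i(3)[of "inv \<sigma> b"] by auto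
    then show "sorted_list_of_set (inv \<sigma> ` {\<sigma> i}) < sorted_list_of_set (inv \<sigma> ` B)"
      using b permutes_inverses(2)[OF \<sigma>] by simp
  qed (use i in auto)
  then show ?thesis
    using find by (simp add: lexfirst_basis_def del: upt_Suc)
qed

lemma lexfirst_basis_cosingletons:
  assumes \<sigma>: "\<sigma> permutes {..n}" and "C \<subseteq> {..n}" "C \<noteq> {}"
  shows "lexfirst_basis \<sigma> ((\<lambda>c. {..n} - {c}) ` C)
       = {..n} - {the (find (\<lambda>x. x \<in> C) (rev (map \<sigma> [0..<Suc n])))}"
proof -
  obtain c where "c \<in> C"
    using assms(3) by blast
  then have "n - inv \<sigma> c \<le> n" "\<sigma> (n - (n - inv \<sigma> c)) \<in> C"
    using assms(2) permutes_atMost_inv[OF \<sigma>, of c] by auto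
  then obtain i where i: "i \<le> n" "\<sigma> (n - i) \<in> C" "\<And>j. j < i \<Longrightarrow> \<sigma> (n - j) \<notin> C"
    and find_rev: "find (\<lambda>x. x \<in> C) (map (\<lambda>i. \<sigma> (n - i)) [0..<Suc n]) = Some (\<sigma> (n - i))"
    by (rule find_map_upt_Some[of _ n "\<lambda>i. \<sigma> (n - i)"]) blast
  have "rev (map \<sigma> [0..<Suc n]) = map (\<lambda>i. \<sigma> (n - i)) [0..<Suc n]"
    by (intro nth_equalityI) (auto simp: rev_nth simp del: upt_Suc)
  with find_rev have find: "find (\<lambda>x. x \<in> C) (rev (map \<sigma> [0..<Suc n])) = Some (\<sigma> (n - i))"
    by simp
  have image: "inv \<sigma> ` ({..n} - {x}) = {..n} - {inv \<sigma> x}" for x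
    using permutes_inv[OF \<sigma>]
    by (metis image_empty image_insert image_set_diff permutes_image permutes_inj)
  have "arg_min (\<lambda>B. sorted_list_of_set (inv \<sigma> ` B)) (\<lambda>B. B \<in> (\<lambda>c. {..n} - {c}) ` C)
      = {..n} - {\<sigma> (n - i)}"
  proof (rule arg_min_eqI)
    fix B assume "B \<in> (\<lambda>c. {..n} - {c}) ` C" "B \<noteq> {..n} - {\<sigma> (n - i)}"
    then obtain b where b: "B = {..n} - {b}" "b \<in> C" "b \<noteq> \<sigma> (n - i)"
      by blast
    have b_pos: "inv \<sigma> b \<le> n" "\<sigma> (inv \<sigma> b) = b"
      using b(2) assms(2) permutes_atMost_inv[OF \<sigma>] by auto
    then have "inv \<sigma> b \<noteq> n - i" "\<not> n - inv \<sigma> b < i"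
      using b(2,3) i(3)[of "n - inv \<sigma> b"] by auto
    then have "inv \<sigma> b < n - i"
      using b_pos(1) by linarith
    then show "sorted_list_of_set (inv \<sigma> ` ({..n} - {\<sigma> (n - i)})) < sorted_list_of_set (inv \<sigma> ` B)"
      using b image permutes_inverses(2)[OF \<sigma>] by (simp add: sorted_list_of_set_atMost_remove_less)
  qed (use i in auto)
  then show ?thesis
    using find by (simp add: lexfirst_basis_def del: upt_Suc)
qed

section \<open>Integrals of the top Chern classes\<close>

lemma elem_sym_eq_0:
  assumes "finite S" "card S < k"
  shows "elem_sym k S x = 0"
proof -
  have "{T. T \<subseteq> S \<and> card T = k} = {}"
    using assms(2) by (auto dest: card_mono[OF assms(1)])
  then show ?thesis
    unfolding elem_sym_def by (simp only:) simp
qed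

lemma elem_sym_card:
  assumes "finite S"
  shows "elem_sym (card S) S x = (\<Prod>i\<in>S. x i)"
proof -
  have "{T. T \<subseteq> S \<and> card T = card S} = {S}"
    using card_subset_eq[OF assms] by auto
  then show ?thesis
    unfolding elem_sym_def by (simp only:) simp
qed

lemma elem_sym_0:
  assumes "finite S"
  shows "elem_sym 0 S x = 1"
proof -
  have "{T. T \<subseteq> S \<and> card T = 0} = {{}}"
    using assms by (auto dest: finite_subset)
  then show ?thesis
    unfolding elem_sym_def by (simp only:) simp
qed

lemma perm_integral_cQ_top_singletons:
  fixes t :: "nat \<Rightarrow> real"
  assumes "A \<subseteq> {..n}" "A \<noteq> {}" "inj_on t {..n}"
  shows "perm_integral n (cQ_top n ((\<lambda>a. {a}) ` A)) t = (if A = {..n} then 1 else 0)"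
proof -
  define g where "g a = elem_sym n ({..n} - {a}) (\<lambda>i. - t i)" for a
  have "perm_integral n (cQ_top n ((\<lambda>a. {a}) ` A)) t
      = (if A = {..n} then (\<Sum>a\<in>A. g a / (\<Prod>w\<in>A - {a}. t a - t w)) else 0)"
    using assms by (intro perm_integral_find) (auto simp: cQ_top_def g_def lexfirst_basis_singletons)
  moreover have "g a = (\<Prod>w\<in>{..n} - {a}. 0 - t w)" if "a \<le> n" for a
    using that elem_sym_card[of "{..n} - {a}" "\<lambda>i. - t i"] by (simp add: g_def)
  ultimately show ?thesis
    using lagrange_interpolation_one[of "{..n}" t 0] assms(3) by simp
qed

lemma perm_integral_cSdual_top_cosingletons:
  fixes t :: "nat \<Rightarrow> real"
  assumes "C \<subseteq> {..n}" "C \<noteq> {}" "inj_on t {..n}"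
  shows "perm_integral n (cSdual_top n ((\<lambda>c. {..n} - {c}) ` C)) t = (if C = {..n} then 1 else 0)"
proof -
  define g where "g c = elem_sym n ({..n} - {c}) t" for c
  have integral: "perm_integral n (cSdual_top n ((\<lambda>c. {..n} - {c}) ` C)) t
      = (-1) ^ n * (if C = {..n} then (\<Sum>c\<in>C. g c / (\<Prod>w\<in>C - {c}. t c - t w)) else 0)"
    using assms by (intro perm_integral_find_rev)
      (auto simp: cSdual_top_def g_def lexfirst_basis_cosingletons)
  have g: "g c = (-1) ^ n * (\<Prod>w\<in>{..n} - {c}. 0 - t w)" if "c \<le> n" for c
  proof -
    have "g c = (\<Prod>w\<in>{..n} - {c}. t w)"
      using that elem_sym_card[of "{..n} - {c}" t] by (simp add: g_def)
    also have "\<dots> = (-1) ^ n * (\<Prod>w\<in>{..n} - {c}. 0 - t w)"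
      using that by (simp add: prod_uminus)
    finally show ?thesis .
  qed
  have "(\<Sum>c\<in>{..n}. g c / (\<Prod>w\<in>{..n} - {c}. t c - t w))
      = (-1) ^ n * (\<Sum>c\<in>{..n}. (\<Prod>w\<in>{..n} - {c}. 0 - t w) / (\<Prod>w\<in>{..n} - {c}. t c - t w))"
    unfolding sum_distrib_left by (intro sum.cong refl) (simp add: g)
  also have "\<dots> = (-1) ^ n"
    using lagrange_interpolation_one[of "{..n}" t 0] assms(3) by simp
  finally have "(-1) ^ n * (\<Sum>c\<in>{..n}. g c / (\<Prod>w\<in>{..n} - {c}. t c - t w)) = (1::real)"
    by (cases "even n") simp_all
  then show ?thesis
    using integral by simp
qed

section \<open>Matroid bases\<close>

lemma matroid_bases_card_eq:
  assumes M: "matroid_bases n Bs" and "B1 \<in> Bs" "B2 \<in> Bs"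
  shows "card B1 = card B2"
  using assms(2)
proof (induction "card (B1 - B2)" arbitrary: B1)
  case 0
  have "finite B1"
    using M 0(2) unfolding matroid_bases_def by (meson finite_atMost finite_subset)
  then have "B1 \<subseteq> B2"
    using 0(1) by auto
  moreover have "B2 \<subseteq> B1"
    using M assms(3) 0(2) \<open>B1 \<subseteq> B2\<close> unfolding matroid_bases_def by blast
  ultimately show ?case
    by simp
next
  case (Suc k)
  have fin: "finite B1" "finite B2"
    using M Suc(3) assms(3) unfolding matroid_bases_def by (meson finite_atMost finite_subset)+
  obtain x where x: "x \<in> B1 - B2"
    using Suc(2) by (metis card.empty ex_in_conv nat.distinct(1))
  then obtain y where y: "y \<in> B2 - B1" and B: "insert y (B1 - {x}) \<in> Bs"
    using M assms(3) Suc(3) unfolding matroid_bases_def by blast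
  have "insert y (B1 - {x}) - B2 = (B1 - B2) - {x}"
    using y by auto
  then have "card (insert y (B1 - {x})) = card B2"
    using Suc(1)[OF _ B] Suc(2) x fin by simp
  moreover have "card (insert y (B1 - {x})) = Suc (card (B1 - {x}))"
    using y fin by (intro card_insert_disjoint) auto
  moreover have "Suc (card (B1 - {x})) = card B1"
    using x fin by (intro card_Suc_Diff1) auto
  ultimately show ?case
    by simp
qed

lemma matroid_bases_rank:
  assumes "matroid_bases n Bs"
  obtains r where "\<And>B. B \<in> Bs \<Longrightarrow> card B = r" "\<And>B. B \<in> Bs \<Longrightarrow> B \<subseteq> {..n}" "Bs \<noteq> {}"
    "r \<le> Suc n" "\<And>k. k \<le> Suc n \<Longrightarrow> Bs = uniform_bases n k \<Longrightarrow> r = k"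
proof -
  obtain B0 where B0: "B0 \<in> Bs" and sub: "\<And>B. B \<in> Bs \<Longrightarrow> B \<subseteq> {..n}"
    using assms by (auto simp: matroid_bases_def)
  have card: "card B = card B0" if "B \<in> Bs" for B
    using matroid_bases_card_eq[OF assms that B0] .
  have "card B0 \<le> Suc n"
    using card_mono[OF finite_atMost sub[OF B0]] by simp
  moreover have "card B0 = k" if "k \<le> Suc n" "Bs = uniform_bases n k" for k
  proof -
    have "{..<k} \<subseteq> {..n}"
      using that(1) by auto
    then show ?thesis
      using that(2) card[of "{..<k}"] by (simp add: uniform_bases_def)
  qed
  ultimately show ?thesis
    using that card sub B0 by blast
qed

lemma finite_matroid_bases:
  assumes "matroid_bases n Bs"
  shows "finite Bs"
  using assms by (intro finite_subset[of Bs "Pow {..n}"]) (auto simp: matroid_bases_def)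

lemma subset_atMost_card_eq_remove:
  assumes "B \<subseteq> {..n}" "card B = n"
  obtains c where "c \<le> n" "B = {..n} - {c}"
proof -
  have "card ({..n} - B) = 1"
    using assms card_Diff_subset[of B "{..n}"] finite_subset[OF assms(1)] by simp
  then obtain c where c: "{..n} - B = {c}"
    by (auto simp: card_1_singleton_iff)
  then have "c \<le> n" "B = {..n} - {c}"
    using assms(1) by auto
  then show ?thesis
    using that by blast
qed

lemma card_one_family_eq_singletons:
  assumes "\<And>B. B \<in> Bs \<Longrightarrow> card B = 1"
  shows "Bs = (\<lambda>a. {a}) ` {a. {a} \<in> Bs}"
  using assms by (auto simp: card_1_singleton_iff)

lemma card_atMost_family_eq_cosingletons:
  assumes "\<And>B. B \<in> Bs \<Longrightarrow> B \<subseteq> {..n}" "\<And>B. B \<in> Bs \<Longrightarrow> card B = n"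
  shows "Bs = (\<lambda>c. {..n} - {c}) ` {c. c \<le> n \<and> {..n} - {c} \<in> Bs}"
proof (intro equalityI subsetI)
  fix B assume B: "B \<in> Bs"
  from assms[OF B] obtain c where "c \<le> n" "B = {..n} - {c}"
    by (rule subset_atMost_card_eq_remove) blast
  with B show "B \<in> (\<lambda>c. {..n} - {c}) ` {c. c \<le> n \<and> {..n} - {c} \<in> Bs}"
    by auto
qed auto

lemma singletons_eq_uniform_bases_iff:
  assumes "A \<subseteq> {..n}"
  shows "(\<lambda>a. {a}) ` A = uniform_bases n 1 \<longleftrightarrow> A = {..n}"
proof
  assume "(\<lambda>a. {a}) ` A = uniform_bases n 1"
  then have "{a} \<in> (\<lambda>a. {a}) ` A" if "a \<le> n" for a
    using that by (simp add: uniform_bases_def)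
  then show "A = {..n}"
    using assms by auto
qed (auto simp: uniform_bases_def card_1_singleton_iff)

lemma cosingletons_eq_uniform_bases_iff:
  assumes "C \<subseteq> {..n}"
  shows "(\<lambda>c. {..n} - {c}) ` C = uniform_bases n n \<longleftrightarrow> C = {..n}"
proof
  assume uniform: "(\<lambda>c. {..n} - {c}) ` C = uniform_bases n n"
  have "c \<in> C" if "c \<le> n" for c
  proof -
    have "{..n} - {c} \<in> uniform_bases n n"
      using that by (simp add: uniform_bases_def)
    then obtain c' where "c' \<in> C" "{..n} - {c} = {..n} - {c'}"
      by (auto simp flip: uniform)
    moreover from this have "c \<notin> {..n} - {c'}"
      by auto
    ultimately show ?thesis
      using that by auto
  qed
  then show "C = {..n}"
    using assms by auto
next
  assume "C = {..n}"
  show "(\<lambda>c. {..n} - {c}) ` C = uniform_bases n n"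
  proof (intro equalityI subsetI)
    fix B assume "B \<in> uniform_bases n n"
    then obtain c where "c \<le> n" "B = {..n} - {c}"
      unfolding uniform_bases_def by (auto elim: subset_atMost_card_eq_remove)
    then show "B \<in> (\<lambda>c. {..n} - {c}) ` C"
      using \<open>C = {..n}\<close> by simp
  qed (auto simp: \<open>C = {..n}\<close> uniform_bases_def)
qed

lemma perm_integral_cQ_top:
  fixes t :: "nat \<Rightarrow> real"
  assumes M: "matroid_bases n Bs" and inj: "inj_on t {..n}"
  shows "perm_integral n (cQ_top n Bs) t = (if is_loop n Bs \<or> Bs = uniform_bases n 1 then 1 else 0)"
proof -
  obtain r where card: "\<And>B. B \<in> Bs \<Longrightarrow> card B = r" and sub: "\<And>B. B \<in> Bs \<Longrightarrow> B \<subseteq> {..n}"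
    and "Bs \<noteq> {}" "r \<le> Suc n" and uniform: "\<And>k. k \<le> Suc n \<Longrightarrow> Bs = uniform_bases n k \<Longrightarrow> r = k"
    using matroid_bases_rank[OF M] by blast
  have lexfirst: "lexfirst_basis \<sigma> Bs \<in> Bs" for \<sigma>
    using finite_matroid_bases[OF M] \<open>Bs \<noteq> {}\<close> by (rule lexfirst_basis_in)
  have loop: "r = 0" if "is_loop n Bs"
    using that card by (auto simp: is_loop_def)
  consider (zero) "r = 0" | (one) "r = 1" | (more) "2 \<le> r"
    by linarith
  then show ?thesis
  proof cases
    case zero
    have "B = {}" if "B \<in> Bs" for B
      using card[OF that] zero finite_subset[OF sub[OF that] finite_atMost] by simp
    then have "Bs = {{}}"
      using \<open>Bs \<noteq> {}\<close> by blast
    then have "perm_integral n (cQ_top n Bs) t = (if n = 0 then elem_sym n {..n} (\<lambda>i. - t i) else 0)"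
      using lexfirst by (intro perm_integral_const[OF inj]) (simp add: cQ_top_def)
    then show ?thesis
      using \<open>Bs = {{}}\<close> uniform[of 1] zero by (auto simp: is_loop_def elem_sym_0)
  next
    case one
    define A where "A = {a. {a} \<in> Bs}"
    have Bs: "Bs = (\<lambda>a. {a}) ` A"
      unfolding A_def using card one by (intro card_one_family_eq_singletons) simp
    have "A \<subseteq> {..n}"
      using sub by (auto simp: A_def)
    moreover have "A \<noteq> {}"
      using \<open>Bs \<noteq> {}\<close> unfolding Bs by blast
    ultimately show ?thesis
      using perm_integral_cQ_top_singletons[OF _ _ inj] singletons_eq_uniform_bases_iff loop one
      by (auto simp: Bs)
  next
    case more
    have "cQ_top n Bs \<sigma> t = 0" for \<sigma>
      using card[OF lexfirst] sub[OF lexfirst] more \<open>r \<le> Suc n\<close> finite_subset[OF sub[OF lexfirst]]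
      by (auto simp: cQ_top_def card_Diff_subset intro!: elem_sym_eq_0)
    then show ?thesis
      using loop uniform[of 1] more by (auto simp: perm_integral_def)
  qed
qed

lemma perm_integral_cSdual_top:
  fixes t :: "nat \<Rightarrow> real"
  assumes M: "matroid_bases n Bs" and inj: "inj_on t {..n}"
  shows "perm_integral n (cSdual_top n Bs) t = (if is_coloop n Bs \<or> Bs = uniform_bases n n then 1 else 0)"
proof -
  obtain r where card: "\<And>B. B \<in> Bs \<Longrightarrow> card B = r" and sub: "\<And>B. B \<in> Bs \<Longrightarrow> B \<subseteq> {..n}"
    and "Bs \<noteq> {}" "r \<le> Suc n" and uniform: "\<And>k. k \<le> Suc n \<Longrightarrow> Bs = uniform_bases n k \<Longrightarrow> r = k"
    using matroid_bases_rank[OF M] by blast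
  have lexfirst: "lexfirst_basis \<sigma> Bs \<in> Bs" for \<sigma>
    using finite_matroid_bases[OF M] \<open>Bs \<noteq> {}\<close> by (rule lexfirst_basis_in)
  have coloop: "r = 1 \<and> n = 0" if "is_coloop n Bs"
    using that card by (auto simp: is_coloop_def)
  consider (full) "r = Suc n" | (corank_one) "r = n" | (less) "r < n"
    using \<open>r \<le> Suc n\<close> by linarith
  then show ?thesis
  proof cases
    case full
    have "B = {..n}" if "B \<in> Bs" for B
      using card[OF that] full card_subset_eq[OF finite_atMost sub[OF that]] by simp
    then have "Bs = {{..n}}"
      using \<open>Bs \<noteq> {}\<close> by blast
    then have "perm_integral n (cSdual_top n Bs) t = (if n = 0 then elem_sym n {..n} t else 0)"
      using lexfirst by (intro perm_integral_const[OF inj]) (simp add: cSdual_top_def)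
    then show ?thesis
      using \<open>Bs = {{..n}}\<close> uniform[of n] full by (auto simp: is_coloop_def elem_sym_0)
  next
    case corank_one
    define C where "C = {c. c \<le> n \<and> {..n} - {c} \<in> Bs}"
    have Bs: "Bs = (\<lambda>c. {..n} - {c}) ` C"
      unfolding C_def using sub card corank_one by (intro card_atMost_family_eq_cosingletons) simp_all
    have "C \<subseteq> {..n}"
      by (auto simp: C_def)
    moreover have "C \<noteq> {}"
      using \<open>Bs \<noteq> {}\<close> unfolding Bs by blast
    ultimately show ?thesis
      using perm_integral_cSdual_top_cosingletons[OF _ _ inj] cosingletons_eq_uniform_bases_iff
        coloop corank_one
      by (auto simp: Bs)
  next
    case less
    have "cSdual_top n Bs \<sigma> t = 0" for \<sigma>
      using card[OF lexfirst] less finite_subset[OF sub[OF lexfirst]]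
      by (auto simp: cSdual_top_def intro!: elem_sym_eq_0)
    then show ?thesis
      using coloop uniform[of n] less by (auto simp: perm_integral_def)
  qed
qed

theorem lemma7p3:
  fixes n :: nat and Bs :: "nat set set" and t :: "nat \<Rightarrow> real"
  assumes "matroid_bases n Bs"
    and "inj_on t {..n}"
  shows "perm_integral n (cQ_top n Bs) t =
           (if is_loop n Bs \<or> Bs = uniform_bases n 1 then 1 else 0)
       \<and> perm_integral n (cSdual_top n Bs) t =
           (if is_coloop n Bs \<or> Bs = uniform_bases n n then 1 else 0)"
  using perm_integral_cQ_top[OF assms] perm_integral_cSdual_top[OF assms] by simp

end
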